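(* Let $E$ and $F$ be Banach spaces, with $E$ infinite-dimensional, having a $K_u$-unconditional basis $\{e_n\}_{n\in\mathbb{N}}$ and an equivalent norm $\|\cdot\|$ that is $C^1$ away from the origin. Let $U\subseteq E$ be open. For every open ball $B_0=B(z_0,r_0)$ with $B(z_0,2r_0)\subseteq U$, every $C^1$ function $f_1:U\to F$, and all numbers $\varepsilon,\eta>0$ with $\sup_{x\in B(z_0,2r_0)}\|Df_1(x)\|<\eta$, there exists a $C^1$ function $\Psi:E\to E$ such that, for $f_2:=f_1\circ\Psi$: (1) $\sup_{x\in B_0}\|f_1(x)-f_2(x)\|<\varepsilon$; (2) $\sup_{x\in B_0}\|Df_2(x)\|<8(K_u)^2\eta$; (3) for every $x\in E$ there exist $n_0\in\mathbb{N}$, a neighbourhood $V_0$ of $x$ and $C^1$ functions $\xi_n,a_n:V_0\to\mathbb{R}$ ($1\le n\le n_0$) such that $$D\Psi(y)(v)=\sum_{n=1}^{n_0}\Big[a_n(y)\,D\|\cdot\|(y-P_{n-1}(y))\big(v-P_{n-1}(v)\big)\,y_n+\xi_n(y)v_n\Big]e_n$$ for every $v=\sum_{n=1}^\infty v_ne_n\in E$ and every $y=\sum_n y_ne_n\in V_0$.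
   Context: $P_n:E\to\operatorname{span}\{e_1,\dots,e_n\}$ denotes the natural projection $P_n(\sum_j x_je_j)=\sum_{j=1}^n x_je_j$, and $P_0=0$. The unconditional constant $K_u$ is the least number such that $\|\sum_{j=1}^n\epsilon_jx_je_j\|\leq K_u\|\sum_{j=1}^nx_je_j\|$ for all signs $\epsilon_j\in\{-1,1\}$ and all finite sums. $D\|\cdot\|(w)$ denotes the derivative of the norm at $w$. *)

theory Defs
  imports "HOL-Analysis.Analysis"
begin

definition schauder_basis :: "(nat \<Rightarrow> 'a::real_normed_vector) \<Rightarrow> bool" where
  "schauder_basis e \<longleftrightarrow>
     (\<forall>x. \<exists>!c::nat \<Rightarrow> real. (\<lambda>n. \<Sum>j<n. c j *\<^sub>R e j) \<longlonglongrightarrow> x)"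

definition coord :: "(nat \<Rightarrow> 'a::real_normed_vector) \<Rightarrow> 'a \<Rightarrow> nat \<Rightarrow> real" where
  "coord e x = (THE c. (\<lambda>n. \<Sum>j<n. c j *\<^sub>R e j) \<longlonglongrightarrow> x)"

definition basis_proj :: "(nat \<Rightarrow> 'a::real_normed_vector) \<Rightarrow> nat \<Rightarrow> 'a \<Rightarrow> 'a" where
  "basis_proj e n x = (\<Sum>j<n. coord e x j *\<^sub>R e j)"

definition uncond_consts :: "(nat \<Rightarrow> 'a::real_normed_vector) \<Rightarrow> real set" where
  "uncond_consts e = {K. \<forall>n (x::nat \<Rightarrow> real) (s::nat \<Rightarrow> real).
      (\<forall>j. s j \<in> {-1, 1}) \<longrightarrow>
      norm (\<Sum>j<n. (s j * x j) *\<^sub>R e j) \<le> K * norm (\<Sum>j<n. x j *\<^sub>R e j)}"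

definition uncond_const :: "(nat \<Rightarrow> 'a::real_normed_vector) \<Rightarrow> real" where
  "uncond_const e = Inf (uncond_consts e)"

definition C1_on :: "'a set \<Rightarrow> ('a::real_normed_vector \<Rightarrow> 'b::real_normed_vector) \<Rightarrow> bool" where
  "C1_on S f \<longleftrightarrow> (\<exists>f' :: 'a \<Rightarrow> ('a \<Rightarrow>\<^sub>L 'b).
      (\<forall>x\<in>S. (f has_derivative blinfun_apply (f' x)) (at x)) \<and> continuous_on S f')"

end

theory Submission
  imports Defs
begin

text \<open>
  Following the paper, \<open>\<Psi>(y) = \<Sum>\<^sub>n \<phi>(\<parallel>y - P\<^sub>n y\<parallel>) y\<^sub>n e\<^sub>n\<close>, where \<open>\<phi>\<close> is a \<open>C\<^sup>2\<close> function vanishing on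
  \<open>(-\<infinity>, \<delta>]\<close> and equal to 1 on \<open>[2\<delta>, \<infinity>)\<close>. The tails \<open>\<parallel>y - P\<^sub>n y\<parallel>\<close> tend to 0 locally
  uniformly, so near every point only finitely many terms are nonzero; hence \<open>\<Psi>\<close> is \<open>C\<^sup>1\<close> and its
  derivative is the finite sum (3). All coefficients \<open>1 - \<phi>(\<parallel>y - P\<^sub>n y\<parallel>)\<close> vanish before the first
  \<open>m\<close> with \<open>\<parallel>y - P\<^sub>m y\<parallel> < 2\<delta>\<close>, so unconditionality bounds \<open>\<parallel>y - \<Psi> y\<parallel>\<close> by \<open>2K\<^sub>u\<delta>\<close>; in the same
  way \<open>\<parallel>D\<Psi>\<parallel> \<le> 5K\<^sub>u\<^sup>2\<close>. For small \<open>\<delta>\<close>, (1) follows from the mean value inequality for \<open>f\<^sub>1\<close> and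
  (2) from the chain rule.
\<close>

section \<open>Continuously differentiable maps\<close>

lemma C1_on_subset: "C1_on S f \<Longrightarrow> T \<subseteq> S \<Longrightarrow> C1_on T f"
  unfolding C1_on_def by (meson continuous_on_subset subsetD)

lemma C1_on_has_frechet_derivative:
  "C1_on S f \<Longrightarrow> x \<in> S \<Longrightarrow> (f has_derivative frechet_derivative f (at x)) (at x)"
  unfolding C1_on_def by (meson differentiableI frechet_derivative_works)

lemma C1_on_imp_continuous_on: "C1_on S f \<Longrightarrow> continuous_on S f"
  by (meson C1_on_has_frechet_derivative continuous_at_imp_continuous_on has_derivative_continuous)

lemma C1_on_localI:
  assumes "\<And>x. x \<in> S \<Longrightarrow> \<exists>V. open V \<and> x \<in> V \<and> C1_on V f"
  shows "C1_on S f"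
proof -
  define F where "F x = Blinfun (frechet_derivative f (at x))" for x
  have F: "(f has_derivative blinfun_apply (F y)) (at y)" if V: "C1_on V f" "y \<in> V" for V y
  proof -
    obtain f' where "(f has_derivative blinfun_apply f') (at y)"
      using V unfolding C1_on_def by blast
    then show ?thesis
      unfolding F_def using frechet_derivative_at by (metis blinfun_apply_inverse)
  qed
  show ?thesis unfolding C1_on_def
  proof (intro exI[of _ F] conjI ballI continuous_at_imp_continuous_on)
    fix x assume "x \<in> S"
    then obtain V where V: "open V" "x \<in> V" "C1_on V f" using assms by blast
    then show "(f has_derivative blinfun_apply (F x)) (at x)" using F by blast
    obtain f' where f': "\<forall>y\<in>V. (f has_derivative blinfun_apply (f' y)) (at y)" "continuous_on V f'"
      using V(3) unfolding C1_on_def by blast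
    have "F y = f' y" if "y \<in> V" for y
      using F[OF V(3) that] f'(1) that by (metis blinfun_eqI has_derivative_unique)
    then show "isCont F x"
      using f'(2) V(1,2) by (metis continuous_on_eq continuous_on_eq_continuous_at)
  qed
qed

lemma C1_on_open_Un: "open S \<Longrightarrow> open T \<Longrightarrow> C1_on S f \<Longrightarrow> C1_on T f \<Longrightarrow> C1_on (S \<union> T) f"
  by (rule C1_on_localI) blast

lemma C1_on_cong:
  assumes "open S" "\<And>x. x \<in> S \<Longrightarrow> f x = g x" "C1_on S f"
  shows "C1_on S g"
proof -
  obtain f' where f': "\<forall>x\<in>S. (f has_derivative blinfun_apply (f' x)) (at x)" "continuous_on S f'"
    using assms(3) unfolding C1_on_def by blast
  have "(g has_derivative blinfun_apply (f' x)) (at x)" if "x \<in> S" for x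
    using has_derivative_transform_within_open[OF _ assms(1) that] f'(1) assms(2) that by blast
  then show ?thesis unfolding C1_on_def using f'(2) by blast
qed

lemma C1_on_bounded_linear: "bounded_linear L \<Longrightarrow> C1_on S L"
  unfolding C1_on_def
  by (intro exI[of _ "\<lambda>_. Blinfun L"])
     (auto simp: bounded_linear_Blinfun_apply bounded_linear_imp_has_derivative)

lemma C1_on_const: "C1_on S (\<lambda>_. c)"
  unfolding C1_on_def by (intro exI[of _ "\<lambda>_. 0"]) (auto simp: zero_blinfun.rep_eq)

lemma C1_on_add:
  assumes "C1_on S f" "C1_on S g"
  shows "C1_on S (\<lambda>x. f x + g x)"
proof -
  obtain F G where F: "\<forall>x\<in>S. (f has_derivative blinfun_apply (F x)) (at x)" "continuous_on S F"
    and G: "\<forall>x\<in>S. (g has_derivative blinfun_apply (G x)) (at x)" "continuous_on S G"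
    using assms unfolding C1_on_def by blast
  show ?thesis unfolding C1_on_def
    by (intro exI[of _ "\<lambda>x. F x + G x"] conjI ballI continuous_on_add F G)
       (auto intro!: has_derivative_eq_rhs[OF has_derivative_add] simp: F G plus_blinfun.rep_eq)
qed

lemma C1_on_sum: "finite I \<Longrightarrow> (\<And>i. i \<in> I \<Longrightarrow> C1_on S (f i)) \<Longrightarrow> C1_on S (\<lambda>x. \<Sum>i\<in>I. f i x)"
  by (induction I rule: finite_induct) (auto intro: C1_on_add C1_on_const)

lemma C1_on_mult:
  fixes f g :: "'a::real_normed_vector \<Rightarrow> real"
  assumes "C1_on S f" "C1_on S g"
  shows "C1_on S (\<lambda>x. f x * g x)"
proof -
  obtain F G where F: "\<forall>x\<in>S. (f has_derivative blinfun_apply (F x)) (at x)" "continuous_on S F"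
    and G: "\<forall>x\<in>S. (g has_derivative blinfun_apply (G x)) (at x)" "continuous_on S G"
    using assms unfolding C1_on_def by blast
  have "continuous_on S f" "continuous_on S g" using assms C1_on_imp_continuous_on by auto
  then show ?thesis unfolding C1_on_def
    by (intro exI[of _ "\<lambda>x. f x *\<^sub>R G x + g x *\<^sub>R F x"] conjI ballI continuous_intros F G)
       (auto intro!: has_derivative_eq_rhs[OF has_derivative_mult] simp: F G plus_blinfun.rep_eq
          scaleR_blinfun.rep_eq mult.commute)
qed

lemma C1_on_compose:
  assumes g: "C1_on S g" and f: "C1_on T f" and "g ` S \<subseteq> T"
  shows "C1_on S (\<lambda>x. f (g x))"
proof -
  obtain G where G: "\<forall>x\<in>S. (g has_derivative blinfun_apply (G x)) (at x)" "continuous_on S G"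
    using g unfolding C1_on_def by blast
  obtain F where F: "\<forall>y\<in>T. (f has_derivative blinfun_apply (F y)) (at y)" "continuous_on T F"
    using f unfolding C1_on_def by blast
  have "continuous_on S (\<lambda>x. F (g x))"
    by (rule continuous_on_compose2[OF F(2) C1_on_imp_continuous_on[OF g]]) (use assms(3) in auto)
  moreover have "((\<lambda>x. f (g x)) has_derivative blinfun_apply (F (g x) o\<^sub>L G x)) (at x)" if "x \<in> S" for x
    using has_derivative_compose[OF G(1)[rule_format, OF that]
        F(1)[rule_format, OF subsetD[OF assms(3) imageI[OF that]]]]
    by (simp add: blinfun_compose.rep_eq comp_def)
  ultimately show ?thesis unfolding C1_on_def
    by (intro exI[of _ "\<lambda>x. F (g x) o\<^sub>L G x"] conjI ballI G(2)
        bounded_bilinear.continuous_on[OF bounded_bilinear_blinfun_compose]) auto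
qed

lemma C1_on_UNIV_real:
  fixes \<psi> :: "real \<Rightarrow> real"
  assumes "\<And>t. (\<psi> has_real_derivative \<psi>' t) (at t)" "continuous_on UNIV \<psi>'"
  shows "C1_on UNIV \<psi>"
  unfolding C1_on_def
  by (rule exI[of _ "\<lambda>t. blinfun_mult_right (\<psi>' t)"])
     (use assms in \<open>auto simp: has_field_derivative_def intro!: continuous_intros\<close>)

lemma C1_on_scaleR_const: "C1_on S f \<Longrightarrow> C1_on S (\<lambda>x. f x *\<^sub>R c)"
  by (rule C1_on_compose[where f="\<lambda>r. r *\<^sub>R c", OF _ C1_on_bounded_linear[OF bounded_linear_scaleR_left]])
     auto

lemma onorm_frechet_derivative_compose_le:
  assumes g: "(g has_derivative g') (at x)" and f: "(f has_derivative f') (at (g x))"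
    and "onorm f' \<le> B" "0 \<le> B" and g'_le: "\<And>v. norm (g' v) \<le> C * norm v" and "0 \<le> C"
  shows "onorm (frechet_derivative (f \<circ> g) (at x)) \<le> B * C"
proof -
  have "frechet_derivative (f \<circ> g) (at x) = f' \<circ> g'"
    using frechet_derivative_at[OF diff_chain_at[OF g f]] by simp
  then have "onorm (frechet_derivative (f \<circ> g) (at x)) \<le> onorm f' * onorm g'"
    using onorm_compose[OF has_derivative_bounded_linear[OF f] has_derivative_bounded_linear[OF g]]
    by simp
  also have "\<dots> \<le> B * C"
    using assms onorm_bound[OF \<open>0 \<le> C\<close> g'_le] onorm_pos_le[OF has_derivative_bounded_linear[OF g]]
    by (intro mult_mono) auto
  finally show ?thesis .
qed

section \<open>A \<open>C\<^sup>2\<close> cutoff function\<close>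

lemma DERIV_if_le:
  fixes g h :: "real \<Rightarrow> real"
  assumes "\<And>t. (g has_real_derivative g' t) (at t)" "\<And>t. (h has_real_derivative h' t) (at t)"
    and "g a = h a" "g' a = h' a"
  shows "((\<lambda>t. if t \<le> a then g t else h t) has_real_derivative (if t \<le> a then g' t else h' t)) (at t)"
proof -
  have "((\<lambda>t. if t \<in> {..a} then g t else h t) has_vector_derivative (if t \<in> {..a} then g' t else h' t))
      (at t within {..a} \<union> {a<..})"
    by (rule has_vector_derivative_If_within_closures)
       (use assms in \<open>auto simp: has_real_derivative_iff_has_vector_derivative[symmetric]
          intro: has_field_derivative_at_within\<close>)
  moreover have "{..a} \<union> {a<..} = UNIV" by auto
  ultimately show ?thesis by (simp add: has_real_derivative_iff_has_vector_derivative)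
qed

definition plateau :: "(real \<Rightarrow> real) \<Rightarrow> real \<Rightarrow> real \<Rightarrow> real" where
  "plateau p d t = p ((max d (min (2 * d) t) - d) / d)"

context fixes d :: real assumes d_pos: "d > 0"
begin

lemma plateau_eq: "plateau p d t = (if t \<le> d then p 0 else if t \<le> 2 * d then p ((t - d) / d) else p 1)"
  using d_pos by (auto simp: plateau_def max_def min_def)

lemma plateau_eq_left: "t \<le> d \<Longrightarrow> plateau p d t = p 0"
  by (simp add: plateau_eq)

lemma plateau_eq_right: "2 * d \<le> t \<Longrightarrow> plateau p d t = p 1"
  using d_pos by (auto simp: plateau_eq)

lemma plateau_in_image: "plateau p d t \<in> p ` {0..1}"
  using d_pos unfolding plateau_def by (intro imageI) (auto simp: field_simps)

lemma has_real_derivative_plateau: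
  assumes p: "\<And>u. (p has_real_derivative p' u) (at u)" and "p' 0 = 0" "p' 1 = 0"
  shows "(plateau p d has_real_derivative plateau (\<lambda>u. p' u / d) d t) (at t)"
proof -
  have "((\<lambda>t. (t - d) / d) has_real_derivative 1 / d) (at t)" for t
    using d_pos by (auto intro!: derivative_eq_intros)
  from DERIV_chain2[OF p this]
  have affine: "((\<lambda>t. p ((t - d) / d)) has_real_derivative p' ((t - d) / d) / d) (at t)" for t
    by simp
  have "((\<lambda>t. if t \<le> 2 * d then p ((t - d) / d) else p 1) has_real_derivative
      (if t \<le> 2 * d then p' ((t - d) / d) / d else 0)) (at t)" for t
    by (rule DERIV_if_le[OF affine DERIV_const]) (use d_pos assms in auto)
  then have "((\<lambda>t. if t \<le> d then p 0 else if t \<le> 2 * d then p ((t - d) / d) else p 1) has_real_derivative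
      (if t \<le> d then 0 else if t \<le> 2 * d then p' ((t - d) / d) / d else 0)) (at t)"
    by (rule DERIV_if_le[OF DERIV_const]) (use d_pos assms in auto)
  moreover have "plateau p d = (\<lambda>t. if t \<le> d then p 0 else if t \<le> 2 * d then p ((t - d) / d) else p 1)"
    by (rule ext) (rule plateau_eq)
  moreover have "plateau (\<lambda>u. p' u / d) d t
      = (if t \<le> d then 0 else if t \<le> 2 * d then p' ((t - d) / d) / d else 0)"
    using assms by (simp add: plateau_eq)
  ultimately show ?thesis by (simp only:)
qed

lemma continuous_on_plateau: "continuous_on UNIV p \<Longrightarrow> continuous_on UNIV (plateau p d)"
  unfolding plateau_def
  by (rule continuous_on_compose2[of UNIV p]) (use d_pos in \<open>auto intro!: continuous_intros\<close>)

end

text \<open>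
  The quintic smoothstep has vanishing first and second derivatives at 0 and 1, which makes the
  cutoff below \<open>C\<^sup>2\<close>: its derivative enters the coefficients \<open>a\<^sub>n\<close> of (3), which must be \<open>C\<^sup>1\<close>.
\<close>

definition smoothstep :: "real \<Rightarrow> real" where
  "smoothstep u = 6 * u^5 - 15 * u^4 + 10 * u^3"

definition smoothstep' :: "real \<Rightarrow> real" where
  "smoothstep' u = 30 * u^4 - 60 * u^3 + 30 * u^2"

definition smoothstep'' :: "real \<Rightarrow> real" where
  "smoothstep'' u = 120 * u^3 - 180 * u^2 + 60 * u"

lemma has_real_derivative_smoothstep: "(smoothstep has_real_derivative smoothstep' u) (at u)"
  unfolding smoothstep_def smoothstep'_def by (auto intro!: derivative_eq_intros)

lemma has_real_derivative_smoothstep': "(smoothstep' has_real_derivative smoothstep'' u) (at u)"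
  unfolding smoothstep'_def smoothstep''_def by (auto intro!: derivative_eq_intros)

lemma smoothstep_bounds:
  assumes "0 \<le> u" "u \<le> 1"
  shows "0 \<le> smoothstep u" "smoothstep u \<le> 1" "0 \<le> smoothstep' u" "smoothstep' u \<le> 2"
proof -
  have "smoothstep u = u^3 * (6 * (u - 5/4)^2 + 5/8)" unfolding smoothstep_def by algebra
  then show "0 \<le> smoothstep u" using assms by simp
  have "1 - smoothstep u = (1 - u)^3 * (6 * u^2 + 3 * u + 1)" unfolding smoothstep_def by algebra
  then show "smoothstep u \<le> 1" using assms by (smt (verit) zero_le_mult_iff zero_le_power)
  define w where "w = u * (1 - u)"
  have "0 \<le> w" using assms by (simp add: w_def)
  moreover have "w \<le> 1/4"
    using zero_le_power2[of "u - 1/2"] by (simp add: w_def power2_eq_square algebra_simps)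
  ultimately have "w^2 \<le> (1/4)^2" by (intro power_mono)
  moreover have "smoothstep' u = 30 * w^2" unfolding w_def smoothstep'_def by algebra
  ultimately show "0 \<le> smoothstep' u" "smoothstep' u \<le> 2" by (auto simp: power2_eq_square)
qed

definition cutoff :: "real \<Rightarrow> real \<Rightarrow> real" where
  "cutoff \<delta> = plateau smoothstep \<delta>"

definition cutoff' :: "real \<Rightarrow> real \<Rightarrow> real" where
  "cutoff' \<delta> = plateau (\<lambda>u. smoothstep' u / \<delta>) \<delta>"

definition cutoff'' :: "real \<Rightarrow> real \<Rightarrow> real" where
  "cutoff'' \<delta> = plateau (\<lambda>u. smoothstep'' u / \<delta> / \<delta>) \<delta>"

context fixes \<delta> :: real assumes \<delta>_pos: "\<delta> > 0"
begin

lemma has_real_derivative_cutoff: "(cutoff \<delta> has_real_derivative cutoff' \<delta> t) (at t)"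
  unfolding cutoff_def cutoff'_def
  by (rule has_real_derivative_plateau[OF \<delta>_pos has_real_derivative_smoothstep])
     (simp_all add: smoothstep'_def)

lemma has_real_derivative_cutoff': "(cutoff' \<delta> has_real_derivative cutoff'' \<delta> t) (at t)"
  unfolding cutoff'_def cutoff''_def
  by (rule has_real_derivative_plateau[OF \<delta>_pos DERIV_cdivide[OF has_real_derivative_smoothstep']])
     (simp_all add: smoothstep''_def)

lemma continuous_on_cutoff': "continuous_on UNIV (cutoff' \<delta>)"
  unfolding cutoff'_def smoothstep'_def
  by (intro continuous_on_plateau[OF \<delta>_pos] continuous_intros) (use \<delta>_pos in auto)

lemma continuous_on_cutoff'': "continuous_on UNIV (cutoff'' \<delta>)"
  unfolding cutoff''_def smoothstep''_def
  by (intro continuous_on_plateau[OF \<delta>_pos] continuous_intros) (use \<delta>_pos in auto)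

lemma cutoff_eq_0: "t \<le> \<delta> \<Longrightarrow> cutoff \<delta> t = 0"
  by (simp add: cutoff_def plateau_eq_left[OF \<delta>_pos] smoothstep_def)

lemma cutoff'_eq_0: "t \<le> \<delta> \<Longrightarrow> cutoff' \<delta> t = 0"
  by (simp add: cutoff'_def plateau_eq_left[OF \<delta>_pos] smoothstep'_def)

lemma cutoff_eq_1: "2 * \<delta> \<le> t \<Longrightarrow> cutoff \<delta> t = 1"
  by (simp add: cutoff_def plateau_eq_right[OF \<delta>_pos] smoothstep_def)

lemma cutoff'_eq_0_right: "2 * \<delta> \<le> t \<Longrightarrow> cutoff' \<delta> t = 0"
  by (simp add: cutoff'_def plateau_eq_right[OF \<delta>_pos] smoothstep'_def)

lemma cutoff_bounds: "0 \<le> cutoff \<delta> t" "cutoff \<delta> t \<le> 1"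
proof -
  obtain u where "0 \<le> u" "u \<le> 1" "cutoff \<delta> t = smoothstep u"
    using plateau_in_image[OF \<delta>_pos, of smoothstep t] unfolding cutoff_def by auto
  then show "0 \<le> cutoff \<delta> t" "cutoff \<delta> t \<le> 1" using smoothstep_bounds by simp_all
qed

lemma abs_cutoff'_le: "\<bar>cutoff' \<delta> t\<bar> \<le> 2 / \<delta>"
proof -
  obtain u where u: "0 \<le> u" "u \<le> 1" "cutoff' \<delta> t = smoothstep' u / \<delta>"
    using plateau_in_image[OF \<delta>_pos, of "\<lambda>u. smoothstep' u / \<delta>" t] unfolding cutoff'_def by auto
  then show ?thesis
    using smoothstep_bounds(3,4)[OF u(1,2)] \<delta>_pos by (simp add: divide_right_mono)
qed

end

lemma abs_derivative_norm_le:
  fixes w :: "'a::real_normed_vector"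
  assumes D: "(norm has_derivative D) (at w)"
  shows "\<bar>D h\<bar> \<le> norm h"
proof -
  have "((\<lambda>t. w + t *\<^sub>R h) has_derivative (\<lambda>t. t *\<^sub>R h)) (at 0)"
    by (auto intro!: derivative_eq_intros)
  moreover have "(norm has_derivative D) (at (w + 0 *\<^sub>R h))" using D by simp
  ultimately have "((\<lambda>t. norm (w + t *\<^sub>R h)) has_derivative (\<lambda>t. D (t *\<^sub>R h))) (at 0)"
    by (rule has_derivative_compose)
  then have "((\<lambda>t. norm (w + t *\<^sub>R h)) has_real_derivative D h) (at 0)"
    unfolding has_field_derivative_def
    by (rule has_derivative_eq_rhs) (simp add: linear_scale[OF has_derivative_linear[OF D]] fun_eq_iff)
  then have "((\<lambda>t. \<bar>(norm (w + t *\<^sub>R h) - norm w) / t\<bar>) \<longlongrightarrow> \<bar>D h\<bar>) (at 0)"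
    unfolding has_field_derivative_iff by (intro tendsto_rabs) simp
  moreover have "\<bar>(norm (w + t *\<^sub>R h) - norm w) / t\<bar> \<le> norm h" if "t \<noteq> 0" for t
  proof -
    have "\<bar>norm (w + t *\<^sub>R h) - norm w\<bar> \<le> \<bar>t\<bar> * norm h"
      by (metis add_diff_cancel_left' norm_scaleR norm_triangle_ineq3)
    then show ?thesis using that by (simp add: abs_divide divide_le_eq mult.commute)
  qed
  ultimately show ?thesis
    by (intro tendsto_le[OF _ tendsto_const]) (auto simp: eventually_at_filter)
qed

context
  fixes Q :: "'a::real_normed_vector \<Rightarrow> 'b::real_normed_vector" and \<psi> \<psi>' :: "real \<Rightarrow> real" and \<delta> :: real
  assumes Q: "bounded_linear Q" and norm_C1: "C1_on (UNIV - {0}) (norm :: 'b \<Rightarrow> real)"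
    and \<psi>: "\<And>t. (\<psi> has_real_derivative \<psi>' t) (at t)"
    and \<psi>_vanish: "\<And>t. t \<le> \<delta> \<Longrightarrow> \<psi> t = 0" and \<delta>_pos: "\<delta> > 0"
begin

lemma open_small_norm: "open {y. norm (Q y) < \<delta>}"
  by (intro open_Collect_less continuous_intros bounded_linear.continuous_on[OF Q])

lemma has_derivative_cutoff_norm:
  "((\<lambda>y. \<psi> (norm (Q y))) has_derivative
     (\<lambda>v. \<psi>' (norm (Q y)) * frechet_derivative norm (at (Q y)) (Q v))) (at y)"
proof (cases "Q y = 0")
  case True
  have "((\<lambda>y. \<psi> (norm (Q y))) has_derivative (\<lambda>v. 0)) (at y)"
    by (rule has_derivative_transform_within_open[OF has_derivative_const open_small_norm])
       (use True \<delta>_pos \<psi>_vanish in auto)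
  moreover have "\<psi>' 0 = 0"
  proof -
    have "(\<psi> has_real_derivative 0) (at 0)"
      by (rule has_field_derivative_transform_within_open[OF DERIV_const, where S="{..<\<delta>}"])
         (use \<delta>_pos \<psi>_vanish in auto)
    then show ?thesis using \<psi> DERIV_unique by blast
  qed
  ultimately show ?thesis using True by simp
next
  case False
  then have "(norm has_derivative frechet_derivative norm (at (Q y))) (at (Q y))"
    using C1_on_has_frechet_derivative[OF norm_C1] by blast
  from has_derivative_compose[OF has_derivative_compose[OF bounded_linear_imp_has_derivative[OF Q] this]
      \<psi>[unfolded has_field_derivative_def]]
  show ?thesis by (simp add: mult.commute)
qed

lemma C1_on_cutoff_norm:
  assumes "continuous_on UNIV \<psi>'"
  shows "C1_on UNIV (\<lambda>y. \<psi> (norm (Q y)))"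
proof -
  have "open {y. Q y \<noteq> 0}"
    by (intro open_Collect_neq continuous_intros bounded_linear.continuous_on[OF Q])
  moreover have "C1_on {y. Q y \<noteq> 0} (\<lambda>y. \<psi> (norm (Q y)))"
    by (intro C1_on_compose[OF C1_on_compose[OF C1_on_bounded_linear[OF Q] norm_C1]
          C1_on_UNIV_real[OF \<psi> assms]]) auto
  moreover have "C1_on {y. norm (Q y) < \<delta>} (\<lambda>y. \<psi> (norm (Q y)))"
    by (rule C1_on_cong[OF open_small_norm _ C1_on_const]) (use \<psi>_vanish in auto)
  ultimately have "C1_on ({y. Q y \<noteq> 0} \<union> {y. norm (Q y) < \<delta>}) (\<lambda>y. \<psi> (norm (Q y)))"
    by (intro C1_on_open_Un open_small_norm)
  moreover have "{y. Q y \<noteq> 0} \<union> {y. norm (Q y) < \<delta>} = UNIV"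
    using \<delta>_pos by auto
  ultimately show ?thesis by simp
qed

end

section \<open>Unconditional Schauder bases\<close>

lemma basis_proj_0 [simp]: "basis_proj e 0 y = 0"
  by (simp add: basis_proj_def)

lemma norm_sum_multiplier_le:
  fixes e :: "nat \<Rightarrow> 'a::real_normed_vector"
  assumes K: "K \<in> uncond_consts e" and \<mu>: "\<And>j. \<bar>\<mu> j\<bar> \<le> 1"
  shows "norm (\<Sum>j<n. (\<mu> j * x j) *\<^sub>R e j) \<le> K * norm (\<Sum>j<n. x j *\<^sub>R e j)"
proof -
  let ?S = "\<lambda>\<nu>. \<Sum>j<n. (\<nu> j * x j) *\<^sub>R e j" and ?B = "K * norm (\<Sum>j<n. x j *\<^sub>R e j)"
  have signs: "norm (?S \<nu>) \<le> ?B" if "\<And>j. \<bar>\<nu> j\<bar> \<le> 1" "\<And>j. k \<le> j \<Longrightarrow> \<nu> j \<in> {-1, 1}" for k \<nu>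
    using that
  proof (induction k arbitrary: \<nu>)
    case 0
    then show ?case using K unfolding uncond_consts_def by blast
  next
    case (Suc k)
    \<comment> \<open>\<nu> is a convex combination of \<nu>(k := 1) and \<nu>(k := -1), which have one more sign entry.\<close>
    define a where "a = (1 + \<nu> k) / 2"
    have a: "0 \<le> a" "a \<le> 1" using Suc.prems(1)[of k] by (auto simp: a_def)
    have "\<nu> j * x j = a * ((\<nu>(k := 1)) j * x j) + (1 - a) * ((\<nu>(k := -1)) j * x j)" for j
      by (cases "j = k") (auto simp: a_def field_simps)
    then have "(\<nu> j * x j) *\<^sub>R e j
        = a *\<^sub>R (((\<nu>(k := 1)) j * x j) *\<^sub>R e j) + (1 - a) *\<^sub>R (((\<nu>(k := -1)) j * x j) *\<^sub>R e j)" for j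
      by (simp only: scaleR_add_left scaleR_scaleR)
    then have "?S \<nu> = a *\<^sub>R ?S (\<nu>(k := 1)) + (1 - a) *\<^sub>R ?S (\<nu>(k := -1))"
      by (simp only: scaleR_sum_right sum.distrib[symmetric])
    also have "norm \<dots> \<le> a * norm (?S (\<nu>(k := 1))) + (1 - a) * norm (?S (\<nu>(k := -1)))"
      using a by (metis (no_types, lifting) abs_of_nonneg diff_ge_0_iff_ge norm_scaleR norm_triangle_ineq)
    also have "\<dots> \<le> a * ?B + (1 - a) * ?B"
      using a Suc.prems by (intro add_mono mult_left_mono Suc.IH) (auto simp: le_Suc_eq)
    finally show ?case by (simp add: algebra_simps)
  qed
  have "norm (?S (\<lambda>j. if j < n then \<mu> j else 1)) \<le> ?B"
    by (rule signs[where k=n]) (use \<mu> in auto)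
  moreover have "?S (\<lambda>j. if j < n then \<mu> j else 1) = ?S \<mu>"
    by (intro sum.cong) auto
  ultimately show ?thesis by simp
qed

definition tail_norm :: "(nat \<Rightarrow> 'a::real_normed_vector) \<Rightarrow> nat \<Rightarrow> 'a \<Rightarrow> real" where
  "tail_norm e n y = norm (y - basis_proj e n y)"

locale schauder =
  fixes e :: "nat \<Rightarrow> 'a::banach"
  assumes basis: "schauder_basis e"
begin

lemma basis_proj_tendsto: "(\<lambda>n. basis_proj e n x) \<longlonglongrightarrow> x"
proof -
  have "\<exists>!c. (\<lambda>n. \<Sum>j<n. c j *\<^sub>R e j) \<longlonglongrightarrow> x" using basis unfolding schauder_basis_def by blast
  from theI'[OF this] show ?thesis unfolding basis_proj_def coord_def .
qed

lemma coord_eqI: "(\<lambda>n. \<Sum>j<n. c j *\<^sub>R e j) \<longlonglongrightarrow> x \<Longrightarrow> coord e x = c"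
  unfolding coord_def by (rule the1_equality) (use basis in \<open>auto simp: schauder_basis_def\<close>)

lemma basis_nonzero: "e j \<noteq> 0"
proof
  assume "e j = 0"
  then have "(\<lambda>n. \<Sum>i<n. ((coord e 0)(j := coord e 0 j + 1)) i *\<^sub>R e i) = (\<lambda>n. basis_proj e n 0)"
    unfolding basis_proj_def by (intro ext sum.cong) auto
  then have "coord e 0 = (coord e 0)(j := coord e 0 j + 1)"
    using basis_proj_tendsto coord_eqI by metis
  then show False by (metis fun_upd_same add_cancel_left_right zero_neq_one)
qed

lemma coord_add: "coord e (x + y) j = coord e x j + coord e y j"
proof -
  have "(\<lambda>n. \<Sum>j<n. (coord e x j + coord e y j) *\<^sub>R e j) \<longlonglongrightarrow> x + y"
    using tendsto_add[OF basis_proj_tendsto basis_proj_tendsto]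
    by (simp add: basis_proj_def scaleR_add_left sum.distrib)
  then show ?thesis by (simp add: coord_eqI)
qed

lemma coord_scaleR: "coord e (r *\<^sub>R x) j = r * coord e x j"
proof -
  have "(\<lambda>n. \<Sum>j<n. (r * coord e x j) *\<^sub>R e j) \<longlonglongrightarrow> r *\<^sub>R x"
    using tendsto_scaleR[OF tendsto_const basis_proj_tendsto]
    by (simp add: basis_proj_def scaleR_sum_right)
  then show ?thesis by (simp add: coord_eqI)
qed

lemma tendsto_tail_sums:
  "(\<lambda>L. \<Sum>j<L. (if m \<le> j then coord e y j else 0) *\<^sub>R e j) \<longlonglongrightarrow> y - basis_proj e m y"
proof (rule Lim_transform_eventually)
  show "(\<lambda>L. basis_proj e L y - basis_proj e m y) \<longlonglongrightarrow> y - basis_proj e m y"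
    by (intro tendsto_diff basis_proj_tendsto tendsto_const)
  have "basis_proj e L y - basis_proj e m y = (\<Sum>j<L. (if m \<le> j then coord e y j else 0) *\<^sub>R e j)"
    if "m \<le> L" for L
  proof -
    have "{..<L} = {..<m} \<union> {m..<L}" using that by auto
    then show ?thesis
      by (simp add: basis_proj_def sum.union_disjoint sum.If_cases Int_def atLeastLessThan_def)
  qed
  then show "\<forall>\<^sub>F L in sequentially. basis_proj e L y - basis_proj e m y =
      (\<Sum>j<L. (if m \<le> j then coord e y j else 0) *\<^sub>R e j)"
    unfolding eventually_sequentially by blast
qed

lemma norm_multiplier_series_le:
  assumes K: "K \<in> uncond_consts e" and \<mu>: "\<And>j. \<bar>\<mu> j\<bar> \<le> 1" and \<mu>_0: "\<And>j. j < m \<Longrightarrow> \<mu> j = 0"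
    and lim: "(\<lambda>L. \<Sum>j<L. (\<mu> j * coord e y j) *\<^sub>R e j) \<longlonglongrightarrow> z"
  shows "norm z \<le> K * norm (y - basis_proj e m y)"
proof (rule LIMSEQ_le[OF tendsto_norm[OF lim] tendsto_mult_left[OF tendsto_norm[OF tendsto_tail_sums]]])
  have "(\<Sum>j<L. (\<mu> j * coord e y j) *\<^sub>R e j) = (\<Sum>j<L. (\<mu> j * (if m \<le> j then coord e y j else 0)) *\<^sub>R e j)"
    for L by (intro sum.cong) (auto simp: \<mu>_0)
  then show "\<exists>N. \<forall>L\<ge>N. norm (\<Sum>j<L. (\<mu> j * coord e y j) *\<^sub>R e j)
      \<le> K * norm (\<Sum>j<L. (if m \<le> j then coord e y j else 0) *\<^sub>R e j)"
    by (simp add: norm_sum_multiplier_le[OF K \<mu>])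
qed

lemma norm_multiplier_sum_le:
  assumes K: "K \<in> uncond_consts e" and \<mu>: "\<And>j. \<bar>\<mu> j\<bar> \<le> 1" and \<mu>_0: "\<And>j. j < m \<Longrightarrow> \<mu> j = 0"
  shows "norm (\<Sum>j<N. (\<mu> j * coord e y j) *\<^sub>R e j) \<le> K * norm (y - basis_proj e m y)"
proof -
  let ?\<nu> = "\<lambda>j. if j < N then \<mu> j else 0"
  have "(\<lambda>j. (?\<nu> j * coord e y j) *\<^sub>R e j) sums (\<Sum>j<N. (?\<nu> j * coord e y j) *\<^sub>R e j)"
    by (rule sums_finite) auto
  then have lim: "(\<lambda>L. \<Sum>j<L. (?\<nu> j * coord e y j) *\<^sub>R e j) \<longlonglongrightarrow> (\<Sum>j<N. (\<mu> j * coord e y j) *\<^sub>R e j)"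
    unfolding sums_def by simp
  show ?thesis by (rule norm_multiplier_series_le[OF K _ _ lim]) (use \<mu> \<mu>_0 in auto)
qed

lemma uncond_consts_ge_1:
  assumes "K \<in> uncond_consts e"
  shows "1 \<le> K"
proof -
  have "norm (e 0) \<le> K * norm (e 0)"
    using norm_sum_multiplier_le[OF assms, where \<mu>="\<lambda>_. 1" and n=1 and x="\<lambda>_. 1"] by simp
  then show ?thesis using basis_nonzero[of 0] by (simp add: mult_le_cancel_right1)
qed

lemma norm_basis_proj_le: "K \<in> uncond_consts e \<Longrightarrow> norm (basis_proj e n y) \<le> K * norm y"
  using norm_multiplier_sum_le[where \<mu>="\<lambda>_. 1" and m=0 and N=n] by (simp add: basis_proj_def)

lemma norm_tail_le:
  assumes K: "K \<in> uncond_consts e"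
  shows "norm (y - basis_proj e n y) \<le> K * norm y"
proof -
  have "(\<lambda>L. \<Sum>j<L. ((if n \<le> j then 1 else 0) * coord e y j) *\<^sub>R e j)
      = (\<lambda>L. \<Sum>j<L. (if n \<le> j then coord e y j else 0) *\<^sub>R e j)"
    by (intro ext sum.cong) auto
  then have lim: "(\<lambda>L. \<Sum>j<L. ((if n \<le> j then 1 else 0) * coord e y j) *\<^sub>R e j) \<longlonglongrightarrow> y - basis_proj e n y"
    using tendsto_tail_sums[of n y] by simp
  have "norm (y - basis_proj e n y) \<le> K * norm (y - basis_proj e 0 y)"
    by (rule norm_multiplier_series_le[OF K _ _ lim]) auto
  then show ?thesis by simp
qed

lemma tail_norm_tendsto_0: "(\<lambda>n. tail_norm e n y) \<longlonglongrightarrow> 0"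
  using tendsto_norm[OF tendsto_diff[OF tendsto_const basis_proj_tendsto, of y y]]
  by (simp add: tail_norm_def)

lemma eventually_tail_norm_less: "0 < \<epsilon> \<Longrightarrow> \<exists>N. \<forall>n\<ge>N. tail_norm e n y < \<epsilon>"
  using order_tendstoD(2)[OF tail_norm_tendsto_0] by (auto simp: eventually_sequentially)

lemma first_tail_norm_less:
  assumes "0 < \<epsilon>"
  obtains m where "tail_norm e m y < \<epsilon>" "\<And>j. j < m \<Longrightarrow> \<epsilon> \<le> tail_norm e j y"
proof
  obtain N where "tail_norm e N y < \<epsilon>" using eventually_tail_norm_less[OF assms] by blast
  then show "tail_norm e (LEAST n. tail_norm e n y < \<epsilon>) y < \<epsilon>" by (rule LeastI)
  show "\<epsilon> \<le> tail_norm e j y" if "j < (LEAST n. tail_norm e n y < \<epsilon>)" for j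
    using not_less_Least[OF that] by simp
qed

end

locale unconditional_schauder = schauder +
  assumes uncond_consts_nonempty: "uncond_consts e \<noteq> {}"
begin

lemma uncond_const_mem: "uncond_const e \<in> uncond_consts e"
  unfolding uncond_const_def
proof (subst (2) uncond_consts_def, safe)
  fix n and x s :: "nat \<Rightarrow> real"
  assume s: "\<forall>j. s j \<in> {-1, 1}"
  let ?A = "norm (\<Sum>j<n. (s j * x j) *\<^sub>R e j)" and ?B = "norm (\<Sum>j<n. x j *\<^sub>R e j)"
  have A: "?A \<le> K * ?B" if "K \<in> uncond_consts e" for K
    using that s unfolding uncond_consts_def by blast
  show "?A \<le> Inf (uncond_consts e) * ?B"
  proof (cases "?B = 0")
    case True
    then show ?thesis using A uncond_consts_nonempty by fastforce
  next
    case False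
    then have "?A / ?B \<le> Inf (uncond_consts e)"
      using A by (intro cInf_greatest uncond_consts_nonempty) (simp add: divide_le_eq mult.commute)
    then show ?thesis using False by (simp add: divide_le_eq mult.commute)
  qed
qed

lemma one_le_uncond_const: "1 \<le> uncond_const e"
  by (rule uncond_consts_ge_1[OF uncond_const_mem])

lemma bounded_linear_coord: "bounded_linear (\<lambda>x. coord e x j)"
proof (rule bounded_linear_intro)
  show "norm (coord e x j) \<le> norm x * (2 * uncond_const e / norm (e j))" for x
  proof -
    have "norm (coord e x j *\<^sub>R e j) = norm (basis_proj e (Suc j) x - basis_proj e j x)"
      by (simp add: basis_proj_def)
    also have "\<dots> \<le> norm (basis_proj e (Suc j) x) + norm (basis_proj e j x)"
      by (rule norm_triangle_ineq4)
    also have "\<dots> \<le> 2 * uncond_const e * norm x"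
      using norm_basis_proj_le[OF uncond_const_mem, where n="Suc j" and y=x]
        norm_basis_proj_le[OF uncond_const_mem, where n=j and y=x] by simp
    finally show ?thesis using basis_nonzero[of j] by (simp add: field_simps)
  qed
qed (simp_all add: coord_add coord_scaleR)

lemma bounded_linear_basis_proj: "bounded_linear (basis_proj e n)"
  unfolding basis_proj_def
  by (intro bounded_linear_sum bounded_linear_compose[OF bounded_linear_scaleR_left]
      bounded_linear_coord)

lemma bounded_linear_tail: "bounded_linear (\<lambda>y. y - basis_proj e n y)"
  by (intro bounded_linear_sub bounded_linear_ident bounded_linear_basis_proj)

lemma tail_norm_le_add: "tail_norm e n y \<le> tail_norm e n x + uncond_const e * dist y x"
proof -
  have "y - basis_proj e n y = (x - basis_proj e n x) + ((y - x) - basis_proj e n (y - x))"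
    using linear_diff[OF bounded_linear.linear[OF bounded_linear_basis_proj]]
    by (simp add: algebra_simps)
  then have "tail_norm e n y \<le> tail_norm e n x + norm ((y - x) - basis_proj e n (y - x))"
    unfolding tail_norm_def by (metis norm_triangle_ineq)
  also have "\<dots> \<le> tail_norm e n x + uncond_const e * dist y x"
    using norm_tail_le[OF uncond_const_mem, where n=n and y="y - x"] by (simp add: dist_norm)
  finally show ?thesis .
qed

end

section \<open>The smoothing map\<close>

definition cutoff_weight :: "(nat \<Rightarrow> 'a::real_normed_vector) \<Rightarrow> real \<Rightarrow> nat \<Rightarrow> 'a \<Rightarrow> real" where
  "cutoff_weight e \<delta> n y = cutoff \<delta> (tail_norm e n y)"

text \<open>
  The index set of the sum is finite for \<open>\<delta> > 0\<close> because the tail norms tend to 0, so this is the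
  series \<open>\<Sum>\<^sub>n \<phi>(\<parallel>y - P\<^sub>n y\<parallel>) y\<^sub>n e\<^sub>n\<close>.
\<close>

definition cutoff_map :: "(nat \<Rightarrow> 'a::real_normed_vector) \<Rightarrow> real \<Rightarrow> 'a \<Rightarrow> 'a" where
  "cutoff_map e \<delta> y = (\<Sum>n | cutoff_weight e \<delta> n y \<noteq> 0. (cutoff_weight e \<delta> n y * coord e y n) *\<^sub>R e n)"

definition cutoff_map_partial :: "(nat \<Rightarrow> 'a::real_normed_vector) \<Rightarrow> real \<Rightarrow> nat \<Rightarrow> 'a \<Rightarrow> 'a" where
  "cutoff_map_partial e \<delta> N y = (\<Sum>n<N. (cutoff_weight e \<delta> n y * coord e y n) *\<^sub>R e n)"

definition cutoff_map_deriv :: "(nat \<Rightarrow> 'a::real_normed_vector) \<Rightarrow> real \<Rightarrow> nat \<Rightarrow> 'a \<Rightarrow> 'a \<Rightarrow> 'a" where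
  "cutoff_map_deriv e \<delta> N y v = (\<Sum>n<N.
     (cutoff' \<delta> (tail_norm e n y)
        * frechet_derivative norm (at (y - basis_proj e n y)) (v - basis_proj e n v) * coord e y n
      + cutoff_weight e \<delta> n y * coord e v n) *\<^sub>R e n)"

locale smooth_unconditional_schauder = unconditional_schauder e for e :: "nat \<Rightarrow> 'a::banach" +
  assumes norm_C1: "C1_on (UNIV - {0}) (norm :: 'a \<Rightarrow> real)"
begin

lemma abs_frechet_derivative_norm_le: "(w::'a) \<noteq> 0 \<Longrightarrow> \<bar>frechet_derivative norm (at w) h\<bar> \<le> norm h"
  by (rule abs_derivative_norm_le[OF C1_on_has_frechet_derivative[OF norm_C1]]) simp

context
  fixes \<delta> :: real
  assumes \<delta>_pos: "\<delta> > 0"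
begin

lemma tail_norm_eventually_small_near: "\<exists>N \<rho>. 0 < \<rho> \<and> (\<forall>y\<in>ball x \<rho>. \<forall>n\<ge>N. tail_norm e n y < \<delta>)"
proof -
  obtain N where N: "\<And>n. N \<le> n \<Longrightarrow> tail_norm e n x < \<delta> / 2"
    using eventually_tail_norm_less[of "\<delta> / 2" x] \<delta>_pos by auto
  define \<rho> where "\<rho> = \<delta> / (2 * uncond_const e)"
  have \<rho>: "0 < \<rho>" "uncond_const e * \<rho> = \<delta> / 2"
    using \<delta>_pos one_le_uncond_const by (auto simp: \<rho>_def)
  have "tail_norm e n y < \<delta>" if "y \<in> ball x \<rho>" "N \<le> n" for y n
  proof -
    have "tail_norm e n y \<le> tail_norm e n x + uncond_const e * dist y x"
      by (rule tail_norm_le_add)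
    also have "uncond_const e * dist y x < uncond_const e * \<rho>"
      using that one_le_uncond_const by (simp add: dist_commute)
    finally show ?thesis using N[OF that(2)] \<rho>(2) by linarith
  qed
  then show ?thesis using \<rho>(1) by blast
qed

lemma cutoff_weight_bounds: "0 \<le> cutoff_weight e \<delta> n y" "cutoff_weight e \<delta> n y \<le> 1"
  using cutoff_bounds[OF \<delta>_pos] by (auto simp: cutoff_weight_def)

lemma cutoff_map_eq_partial:
  assumes "\<And>n. N \<le> n \<Longrightarrow> cutoff_weight e \<delta> n y = 0"
  shows "cutoff_map e \<delta> y = cutoff_map_partial e \<delta> N y"
  unfolding cutoff_map_def cutoff_map_partial_def
  by (rule sum.mono_neutral_left) (use assms not_le in auto)

lemma cutoff_map_locally_partial:
  "\<exists>N \<rho>. 0 < \<rho> \<and> (\<forall>y\<in>ball x \<rho>. cutoff_map e \<delta> y = cutoff_map_partial e \<delta> N y)"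
proof -
  obtain N \<rho> where "0 < \<rho>" and small: "\<And>y n. y \<in> ball x \<rho> \<Longrightarrow> N \<le> n \<Longrightarrow> tail_norm e n y < \<delta>"
    using tail_norm_eventually_small_near by blast
  have "cutoff_map e \<delta> y = cutoff_map_partial e \<delta> N y" if "y \<in> ball x \<rho>" for y
    by (rule cutoff_map_eq_partial)
       (use small[OF that] in \<open>auto simp: cutoff_weight_def intro!: cutoff_eq_0[OF \<delta>_pos] less_imp_le\<close>)
  then show ?thesis using \<open>0 < \<rho>\<close> by blast
qed

lemma has_derivative_cutoff_weight:
  "(cutoff_weight e \<delta> n has_derivative (\<lambda>v. cutoff' \<delta> (tail_norm e n y)
      * frechet_derivative norm (at (y - basis_proj e n y)) (v - basis_proj e n v))) (at y)"
  unfolding cutoff_weight_def[abs_def] tail_norm_def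
  by (rule has_derivative_cutoff_norm[OF bounded_linear_tail norm_C1
        has_real_derivative_cutoff[OF \<delta>_pos] cutoff_eq_0[OF \<delta>_pos] \<delta>_pos])

lemma C1_on_cutoff_weight: "C1_on UNIV (cutoff_weight e \<delta> n)"
  unfolding cutoff_weight_def[abs_def] tail_norm_def
  by (rule C1_on_cutoff_norm[OF bounded_linear_tail norm_C1 has_real_derivative_cutoff[OF \<delta>_pos]
        cutoff_eq_0[OF \<delta>_pos] \<delta>_pos continuous_on_cutoff'[OF \<delta>_pos]])

lemma C1_on_cutoff'_tail_norm: "C1_on UNIV (\<lambda>y. cutoff' \<delta> (tail_norm e n y))"
  unfolding tail_norm_def
  by (rule C1_on_cutoff_norm[OF bounded_linear_tail norm_C1 has_real_derivative_cutoff'[OF \<delta>_pos]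
        cutoff'_eq_0[OF \<delta>_pos] \<delta>_pos continuous_on_cutoff''[OF \<delta>_pos]])

lemma has_derivative_cutoff_map_partial:
  "(cutoff_map_partial e \<delta> N has_derivative cutoff_map_deriv e \<delta> N y) (at y)"
  unfolding cutoff_map_partial_def[abs_def] cutoff_map_deriv_def
  by (rule has_derivative_sum, rule has_derivative_eq_rhs,
      rule has_derivative_scaleR[OF has_derivative_mult[OF has_derivative_cutoff_weight
          bounded_linear_imp_has_derivative[OF bounded_linear_coord]] has_derivative_const])
     (simp add: algebra_simps)

lemma C1_on_cutoff_map_partial: "C1_on UNIV (cutoff_map_partial e \<delta> N)"
  unfolding cutoff_map_partial_def[abs_def]
  by (intro C1_on_sum finite_lessThan C1_on_scaleR_const C1_on_mult C1_on_cutoff_weight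
      C1_on_bounded_linear[OF bounded_linear_coord])

lemma has_derivative_cutoff_map_near:
  "\<exists>N \<rho>. 0 < \<rho> \<and> (\<forall>y\<in>ball x \<rho>. (cutoff_map e \<delta> has_derivative cutoff_map_deriv e \<delta> N y) (at y))"
proof -
  obtain N \<rho> where "0 < \<rho>" and eq: "\<And>y. y \<in> ball x \<rho> \<Longrightarrow> cutoff_map e \<delta> y = cutoff_map_partial e \<delta> N y"
    using cutoff_map_locally_partial by blast
  have "(cutoff_map e \<delta> has_derivative cutoff_map_deriv e \<delta> N y) (at y)" if "y \<in> ball x \<rho>" for y
    by (rule has_derivative_transform_within_open[OF has_derivative_cutoff_map_partial open_ball that])
       (simp add: eq)
  then show ?thesis using \<open>0 < \<rho>\<close> by blast
qed

lemma C1_on_cutoff_map: "C1_on UNIV (cutoff_map e \<delta>)"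
proof (rule C1_on_localI)
  fix x :: 'a
  obtain N \<rho> where "0 < \<rho>" and eq: "\<And>y. y \<in> ball x \<rho> \<Longrightarrow> cutoff_map e \<delta> y = cutoff_map_partial e \<delta> N y"
    using cutoff_map_locally_partial by blast
  then have "C1_on (ball x \<rho>) (cutoff_map e \<delta>)"
    using C1_on_cong[OF open_ball _ C1_on_subset[OF C1_on_cutoff_map_partial]] by (metis subset_UNIV)
  then show "\<exists>V. open V \<and> x \<in> V \<and> C1_on V (cutoff_map e \<delta>)"
    using \<open>0 < \<rho>\<close> by (intro exI[of _ "ball x \<rho>"]) auto
qed

lemma norm_diff_cutoff_map_le: "norm (y - cutoff_map e \<delta> y) \<le> 2 * uncond_const e * \<delta>"
proof -
  obtain N where "\<forall>n\<ge>N. tail_norm e n y < \<delta>"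
    using eventually_tail_norm_less \<delta>_pos by blast
  then have N: "cutoff_weight e \<delta> n y = 0" if "N \<le> n" for n
    using that by (auto simp: cutoff_weight_def intro!: cutoff_eq_0[OF \<delta>_pos] less_imp_le)
  obtain m where m: "tail_norm e m y < 2 * \<delta>" and "\<And>j. j < m \<Longrightarrow> 2 * \<delta> \<le> tail_norm e j y"
    using first_tail_norm_less \<delta>_pos by (metis mult_pos_pos zero_less_numeral)
  then have below_m: "cutoff_weight e \<delta> j y = 1" if "j < m" for j
    using that by (simp add: cutoff_weight_def cutoff_eq_1[OF \<delta>_pos])
  define \<mu> where "\<mu> j = 1 - cutoff_weight e \<delta> j y" for j
  have lim: "(\<lambda>L. \<Sum>j<L. (\<mu> j * coord e y j) *\<^sub>R e j) \<longlonglongrightarrow> y - cutoff_map e \<delta> y"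
  proof (rule Lim_transform_eventually)
    show "(\<lambda>L. basis_proj e L y - cutoff_map e \<delta> y) \<longlonglongrightarrow> y - cutoff_map e \<delta> y"
      by (intro tendsto_diff basis_proj_tendsto tendsto_const)
    have "basis_proj e L y - cutoff_map e \<delta> y = (\<Sum>j<L. (\<mu> j * coord e y j) *\<^sub>R e j)" if "N \<le> L" for L
    proof -
      have "cutoff_map e \<delta> y = cutoff_map_partial e \<delta> L y"
        by (rule cutoff_map_eq_partial) (use N that in auto)
      then show ?thesis
        by (simp add: cutoff_map_partial_def basis_proj_def \<mu>_def algebra_simps
            sum_subtractf[symmetric])
    qed
    then show "\<forall>\<^sub>F L in sequentially.
        basis_proj e L y - cutoff_map e \<delta> y = (\<Sum>j<L. (\<mu> j * coord e y j) *\<^sub>R e j)"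
      unfolding eventually_sequentially by blast
  qed
  have "norm (y - cutoff_map e \<delta> y) \<le> uncond_const e * tail_norm e m y"
    unfolding tail_norm_def
    by (rule norm_multiplier_series_le[OF uncond_const_mem _ _ lim])
       (use cutoff_weight_bounds below_m in \<open>auto simp: \<mu>_def\<close>)
  also have "\<dots> \<le> uncond_const e * (2 * \<delta>)"
    using m one_le_uncond_const by (intro mult_left_mono) auto
  finally show ?thesis by simp
qed

lemma norm_weighted_coords_le:
  "norm (\<Sum>n<N. (cutoff_weight e \<delta> n y * coord e v n) *\<^sub>R e n) \<le> uncond_const e * norm v"
proof -
  have "norm (\<Sum>n<N. (cutoff_weight e \<delta> n y * coord e v n) *\<^sub>R e n)
      \<le> uncond_const e * norm (v - basis_proj e 0 v)"
    by (rule norm_multiplier_sum_le[OF uncond_const_mem]) (use cutoff_weight_bounds in auto)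
  then show ?thesis by simp
qed

lemma abs_cutoff'_tail_norm_deriv_le:
  "\<bar>cutoff' \<delta> (tail_norm e n y)
      * frechet_derivative norm (at (y - basis_proj e n y)) (v - basis_proj e n v)\<bar>
    \<le> 2 / \<delta> * (uncond_const e * norm v)"
proof (cases "tail_norm e n y \<le> \<delta>")
  case True
  then show ?thesis using \<delta>_pos one_le_uncond_const by (simp add: cutoff'_eq_0[OF \<delta>_pos])
next
  case False
  then have "y - basis_proj e n y \<noteq> 0" using \<delta>_pos by (auto simp: tail_norm_def)
  then have "\<bar>frechet_derivative norm (at (y - basis_proj e n y)) (v - basis_proj e n v)\<bar>
      \<le> uncond_const e * norm v"
    using abs_frechet_derivative_norm_le norm_tail_le[OF uncond_const_mem] order_trans by blast
  then show ?thesis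
    using abs_cutoff'_le[OF \<delta>_pos] \<delta>_pos unfolding abs_mult by (intro mult_mono) auto
qed

lemma norm_weighted_tail_derivs_le:
  "norm (\<Sum>n<N. (cutoff' \<delta> (tail_norm e n y)
      * frechet_derivative norm (at (y - basis_proj e n y)) (v - basis_proj e n v) * coord e y n) *\<^sub>R e n)
    \<le> 4 * (uncond_const e)^2 * norm v"
proof -
  define K where "K = uncond_const e"
  have K: "K \<in> uncond_consts e" "1 \<le> K"
    unfolding K_def by (rule uncond_const_mem, rule one_le_uncond_const)
  define c where "c n = cutoff' \<delta> (tail_norm e n y)
      * frechet_derivative norm (at (y - basis_proj e n y)) (v - basis_proj e n v)" for n
  define A where "A = 2 / \<delta> * (K * norm v)"
  have c_le: "\<bar>c n\<bar> \<le> A" for n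
    unfolding c_def A_def K_def by (rule abs_cutoff'_tail_norm_deriv_le)
  obtain m where m: "tail_norm e m y < 2 * \<delta>" and "\<And>j. j < m \<Longrightarrow> 2 * \<delta> \<le> tail_norm e j y"
    using first_tail_norm_less \<delta>_pos by (metis mult_pos_pos zero_less_numeral)
  then have below_m: "c j = 0" if "j < m" for j
    using that by (simp add: c_def cutoff'_eq_0_right[OF \<delta>_pos])
  let ?T = "\<Sum>n<N. (c n * coord e y n) *\<^sub>R e n"
  have "norm ?T \<le> 4 * K^2 * norm v"
  proof (cases "A = 0")
    case True
    then show ?thesis using c_le by simp
  next
    case False
    then have A: "A > 0" using c_le[of 0] by linarith
    have "norm (\<Sum>n<N. ((c n / A) * coord e y n) *\<^sub>R e n) \<le> K * tail_norm e m y"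
      unfolding tail_norm_def
      by (rule norm_multiplier_sum_le[OF K(1)]) (use c_le below_m A in \<open>auto simp: abs_divide\<close>)
    moreover have "?T = A *\<^sub>R (\<Sum>n<N. ((c n / A) * coord e y n) *\<^sub>R e n)"
      using A by (simp add: scaleR_sum_right)
    ultimately have "norm ?T \<le> A * (K * tail_norm e m y)"
      using A by (simp add: mult_left_mono)
    also have "\<dots> \<le> A * (K * (2 * \<delta>))"
      using m A K by (intro mult_left_mono) auto
    also have "\<dots> = 4 * K^2 * norm v"
      using \<delta>_pos by (simp add: A_def power2_eq_square)
    finally show ?thesis .
  qed
  then show ?thesis by (simp add: K_def c_def)
qed

lemma norm_cutoff_map_deriv_le: "norm (cutoff_map_deriv e \<delta> N y v) \<le> 5 * (uncond_const e)^2 * norm v"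
proof -
  let ?T = "\<Sum>n<N. (cutoff' \<delta> (tail_norm e n y)
      * frechet_derivative norm (at (y - basis_proj e n y)) (v - basis_proj e n v) * coord e y n) *\<^sub>R e n"
  let ?W = "\<Sum>n<N. (cutoff_weight e \<delta> n y * coord e v n) *\<^sub>R e n"
  have "norm (cutoff_map_deriv e \<delta> N y v) \<le> norm ?T + norm ?W"
    unfolding cutoff_map_deriv_def by (simp add: scaleR_add_left sum.distrib norm_triangle_ineq)
  also have "\<dots> \<le> 4 * (uncond_const e)^2 * norm v + uncond_const e * norm v"
    using norm_weighted_tail_derivs_le norm_weighted_coords_le by (rule add_mono)
  also have "uncond_const e * norm v \<le> (uncond_const e)^2 * norm v"
    using one_le_uncond_const by (intro mult_right_mono) (auto simp: power2_eq_square)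
  finally show ?thesis by (simp add: ac_simps)
qed

lemma frechet_derivative_cutoff_map_locally:
  "\<exists>n0 V0 (\<xi>::nat \<Rightarrow> 'a \<Rightarrow> real) (a::nat \<Rightarrow> 'a \<Rightarrow> real).
    open V0 \<and> x \<in> V0 \<and> (\<forall>n<n0. C1_on V0 (\<xi> n) \<and> C1_on V0 (a n)) \<and>
    (\<forall>y\<in>V0. \<forall>v. frechet_derivative (cutoff_map e \<delta>) (at y) v =
       (\<Sum>n<n0. (a n y * frechet_derivative norm (at (y - basis_proj e n y)) (v - basis_proj e n v)
          * coord e y n + \<xi> n y * coord e v n) *\<^sub>R e n))"
proof -
  obtain N \<rho> where "0 < \<rho>"
    and D: "\<forall>y\<in>ball x \<rho>. (cutoff_map e \<delta> has_derivative cutoff_map_deriv e \<delta> N y) (at y)"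
    using has_derivative_cutoff_map_near by blast
  have D_eq: "frechet_derivative (cutoff_map e \<delta>) (at y) v = cutoff_map_deriv e \<delta> N y v"
    if "y \<in> ball x \<rho>" for y v
    using frechet_derivative_at D that by metis
  show ?thesis
    by (rule exI[of _ N], rule exI[of _ "ball x \<rho>"], rule exI[of _ "cutoff_weight e \<delta>"],
        rule exI[of _ "\<lambda>n y. cutoff' \<delta> (tail_norm e n y)"])
       (use D_eq \<open>0 < \<rho>\<close> C1_on_subset[OF C1_on_cutoff_weight subset_UNIV]
          C1_on_subset[OF C1_on_cutoff'_tail_norm subset_UNIV] in \<open>auto simp: cutoff_map_deriv_def\<close>)
qed

lemma onorm_frechet_derivative_compose_cutoff_map_le:
  assumes f: "(f has_derivative f') (at (cutoff_map e \<delta> x))" and "onorm f' \<le> B" "0 \<le> B"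
  shows "onorm (frechet_derivative (f \<circ> cutoff_map e \<delta>) (at x)) \<le> B * (5 * (uncond_const e)^2)"
proof -
  obtain N \<rho> where "0 < \<rho>"
    and D: "\<forall>y\<in>ball x \<rho>. (cutoff_map e \<delta> has_derivative cutoff_map_deriv e \<delta> N y) (at y)"
    using has_derivative_cutoff_map_near by blast
  then have "(cutoff_map e \<delta> has_derivative cutoff_map_deriv e \<delta> N x) (at x)" by simp
  from onorm_frechet_derivative_compose_le[OF this f assms(2,3) norm_cutoff_map_deriv_le]
  show ?thesis by simp
qed

lemma cutoff_map_compose_estimates:
  assumes f: "\<And>x. x \<in> ball z (2 * r) \<Longrightarrow> (f has_derivative frechet_derivative f (at x)) (at x)"
    and Df: "\<And>x. x \<in> ball z (2 * r) \<Longrightarrow> onorm (frechet_derivative f (at x)) \<le> c"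
    and "0 \<le> c" and small: "2 * uncond_const e * \<delta> < r" and x: "x \<in> ball z r"
  shows "cutoff_map e \<delta> x \<in> ball z (2 * r)"
    and "norm (f x - f (cutoff_map e \<delta> x)) \<le> c * (2 * uncond_const e * \<delta>)"
    and "onorm (frechet_derivative (f \<circ> cutoff_map e \<delta>) (at x)) \<le> c * (5 * (uncond_const e)^2)"
proof -
  have near: "norm (x - cutoff_map e \<delta> x) \<le> 2 * uncond_const e * \<delta>"
    by (rule norm_diff_cutoff_map_le)
  show ball: "cutoff_map e \<delta> x \<in> ball z (2 * r)"
    using dist_triangle[of z "cutoff_map e \<delta> x" x] near small x by (simp add: dist_norm)
  have "0 < 2 * uncond_const e * \<delta>" using \<delta>_pos one_le_uncond_const by simp
  then have x2: "x \<in> ball z (2 * r)" using x small by (simp only: mem_ball)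
  have "(f has_derivative frechet_derivative f (at y)) (at y within ball z (2 * r))"
    if "y \<in> ball z (2 * r)" for y
    using f[OF that] by (rule has_derivative_at_withinI)
  from differentiable_bound[OF convex_ball this Df x2 ball]
  have "norm (f x - f (cutoff_map e \<delta> x)) \<le> c * norm (x - cutoff_map e \<delta> x)" .
  then show "norm (f x - f (cutoff_map e \<delta> x)) \<le> c * (2 * uncond_const e * \<delta>)"
    using near \<open>0 \<le> c\<close> by (meson mult_left_mono order_trans)
  show "onorm (frechet_derivative (f \<circ> cutoff_map e \<delta>) (at x)) \<le> c * (5 * (uncond_const e)^2)"
    by (rule onorm_frechet_derivative_compose_cutoff_map_le[OF f[OF ball] Df[OF ball] \<open>0 \<le> c\<close>])
qed

end

end

lemma obtain_small_radius:
  fixes r \<epsilon> \<eta> c K :: real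
  assumes "0 < r" "0 < \<epsilon>" "0 \<le> c" "c < \<eta>" "1 \<le> K"
  obtains \<delta> where "0 < \<delta>" "2 * K * \<delta> < r" "c * (2 * K * \<delta>) < \<epsilon>"
proof
  define \<delta> where "\<delta> = min r (\<epsilon> / \<eta>) / (4 * K)"
  have "2 * K * \<delta> = min r (\<epsilon> / \<eta>) / 2" using assms by (simp add: \<delta>_def)
  moreover have "c * min r (\<epsilon> / \<eta>) \<le> \<eta> * (\<epsilon> / \<eta>)"
    using assms by (intro mult_mono) auto
  ultimately show "0 < \<delta>" "2 * K * \<delta> < r" "c * (2 * K * \<delta>) < \<epsilon>"
    using assms by (auto simp: \<delta>_def)
qed

theorem lemma3p3:
  fixes e :: "nat \<Rightarrow> 'a::banach"
    and U :: "'a set"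
    and f1 :: "'a \<Rightarrow> 'b::banach"
    and z0 :: 'a and r0 \<epsilon> \<eta> :: real
  assumes inf_dim: "\<not> (\<exists>B. finite B \<and> span B = (UNIV :: 'a set))"
    and basis: "schauder_basis e"
    and uncond: "uncond_consts e \<noteq> {}"
    and smooth_norm: "C1_on (UNIV - {0}) (norm :: 'a \<Rightarrow> real)"
    and U_open: "open U"
    and r0_pos: "r0 > 0"
    and ball_sub: "ball z0 (2 * r0) \<subseteq> U"
    and f1_C1: "C1_on U f1"
    and eps_pos: "\<epsilon> > 0" and eta_pos: "\<eta> > 0"
    and deriv_small: "\<exists>c < \<eta>. \<forall>x\<in>ball z0 (2 * r0). onorm (frechet_derivative f1 (at x)) \<le> c"
  shows "\<exists>\<Psi> :: 'a \<Rightarrow> 'a. C1_on UNIV \<Psi> \<and> \<Psi> ` ball z0 r0 \<subseteq> U \<and>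
     (\<exists>c < \<epsilon>. \<forall>x\<in>ball z0 r0. norm (f1 x - (f1 \<circ> \<Psi>) x) \<le> c) \<and>
     (\<exists>c < 8 * (uncond_const e)\<^sup>2 * \<eta>.
        \<forall>x\<in>ball z0 r0. onorm (frechet_derivative (f1 \<circ> \<Psi>) (at x)) \<le> c) \<and>
     (\<forall>x. \<exists>(n0::nat) V0 (\<xi>::nat \<Rightarrow> 'a \<Rightarrow> real) (a::nat \<Rightarrow> 'a \<Rightarrow> real).
        open V0 \<and> x \<in> V0 \<and> (\<forall>n<n0. C1_on V0 (\<xi> n) \<and> C1_on V0 (a n)) \<and>
        (\<forall>y\<in>V0. \<forall>v. frechet_derivative \<Psi> (at y) v =
           (\<Sum>n<n0. (a n y * frechet_derivative norm (at (y - basis_proj e n y)) (v - basis_proj e n v)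
                        * coord e y n + \<xi> n y * coord e v n) *\<^sub>R e n)))"
proof -
  interpret smooth_unconditional_schauder e
    by unfold_locales (fact basis uncond smooth_norm)+
  define K where "K = uncond_const e"
  have K: "1 \<le> K" unfolding K_def by (rule one_le_uncond_const)
  obtain c where c: "0 \<le> c" "c < \<eta>"
    and Df1: "\<And>x. x \<in> ball z0 (2 * r0) \<Longrightarrow> onorm (frechet_derivative f1 (at x)) \<le> c"
  proof -
    obtain c0 where "c0 < \<eta>" "\<forall>x\<in>ball z0 (2 * r0). onorm (frechet_derivative f1 (at x)) \<le> c0"
      using deriv_small by blast
    then show thesis using eta_pos by (intro that[of "max c0 0"]) (auto simp: le_max_iff_disj)
  qed
  obtain \<delta> where \<delta>: "0 < \<delta>" "2 * K * \<delta> < r0" "c * (2 * K * \<delta>) < \<epsilon>"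
    using obtain_small_radius[OF r0_pos eps_pos c K] .
  have "c * (5 * K^2) < \<eta> * (5 * K^2)" using c K by (intro mult_strict_right_mono) auto
  also have "\<dots> \<le> 8 * K^2 * \<eta>" using eta_pos by (simp add: algebra_simps)
  finally have "c * (5 * K^2) < 8 * K^2 * \<eta>" .
  have Df1_has: "(f1 has_derivative frechet_derivative f1 (at x)) (at x)"
    if "x \<in> ball z0 (2 * r0)" for x
    using C1_on_has_frechet_derivative[OF f1_C1] ball_sub that by blast
  note estimates =
    cutoff_map_compose_estimates[OF \<delta>(1) Df1_has Df1 c(1) \<delta>(2)[unfolded K_def], folded K_def]
  show ?thesis
  proof (intro exI[of _ "cutoff_map e \<delta>"] conjI)
    show "C1_on UNIV (cutoff_map e \<delta>)" by (rule C1_on_cutoff_map[OF \<delta>(1)])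
    show "cutoff_map e \<delta> ` ball z0 r0 \<subseteq> U" using estimates(1) ball_sub by blast
    show "\<exists>c<\<epsilon>. \<forall>x\<in>ball z0 r0. norm (f1 x - (f1 \<circ> cutoff_map e \<delta>) x) \<le> c"
      using estimates(2) \<delta>(3) by (intro exI[of _ "c * (2 * K * \<delta>)"]) auto
    show "\<exists>c<8 * (uncond_const e)\<^sup>2 * \<eta>.
        \<forall>x\<in>ball z0 r0. onorm (frechet_derivative (f1 \<circ> cutoff_map e \<delta>) (at x)) \<le> c"
      using estimates(3) \<open>c * (5 * K^2) < 8 * K^2 * \<eta>\<close>
      by (intro exI[of _ "c * (5 * K^2)"]) (auto simp: K_def)
  qed (intro allI frechet_derivative_cutoff_map_locally[OF \<delta>(1)])
qed

end
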